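(* Let $G_M$ be a maximal reducible graph solved by a line-tree $T_M$. Then the line-tree $T_1$ obtained from $T_M$ by inverting the entire tree is a persistent phylogeny solving $G_M$.
   Context: Persistent phylogeny. Let $M$ be a binary matrix with rows indexed by species $S$ and columns by characters $C=\{c_1,\dots,c_m\}$, and $A\subseteq C$ (active characters). A persistent phylogeny for $(M,A)$ is a rooted tree $T$ whose nodes $x$ carry vectors $l_x\in\{0,1\}^m$ (the state of $x$) such that: the root $r$ has $l_r[j]=1$ iff $c_j\in A$; each edge is labelled $c_j^+$ for each character changing from 0 to 1 on it and $c_j^-$ for each changing from 1 to 0; each character changes state on at most two edges, and if on two, they lie on one root-to-leaf path with the gain $c_j^+$ closer to the root than the loss $c_j^-$; each row of $M$ equals $l_x$ for some node $x$ (such a node is a species node of $T$). Red-black graphs. A red-black graph on species $S$ and characters $C$ is a bipartite graph on $S\cup C$ with red or black edges, each character incident only to black edges (inactive) or only to red edges (active). Its associated matrix has $M[s,c]=1$ iff $(s,c)$ is black, or $c$ is active and $(s,c)$ is not an edge; a tree solving the graph is a persistent phylogeny for (associated matrix, set of active characters). $S(c)=\{s:M[s,c]=1\}$. Realizing $c^+$ ($c$ inactive): with $D(c)$ the species of the component of $c$, add red edges from $c$ to $D(c)\setminus N(c)$, delete black edges on $c$ and isolated vertices; realizing $c^-$ ($c$ active, $D(c)\subseteq N(c)$): delete all edges on $c$ and isolated vertices. An active character red-adjacent to all species is free. A c-reduction $\langle c_1^+,\dots,c_k^+\rangle$ is successful if realizing the characters in order is always defined (realizing negatively each character right after it becomes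 free) and yields the empty graph. A red-black graph is reducible if it is connected and admits a successful reduction (i.e. is solved by some persistent phylogeny). Standing assumption: no free, null (isolated) or universal (inactive and black-adjacent to all species) characters, no species with no characters, no two identical character columns. An inactive character $c$ is maximal if no inactive $c'$ has $S(c)\subsetneq S(c')$. A maximal reducible graph is a reducible red-black graph all of whose characters are inactive and maximal. Line-trees and inversion. A line-tree is a tree consisting of a single path from the root (internal nodes have one child). A simple path may be contracted into one edge labelled by the sequence of labels on it. If $T_1$ is a line-tree whose sequence of species in depth-first order is $s_1,\dots,s_k$, the inverted tree $T_2$ is the line-tree with species sequence $s_k,\dots,s_1$, where the edge $(s_{i+1},s_i)$ of $T_2$ carries the same characters as the edge $(s_i,s_{i+1})$ of $T_1$ but with opposite signs (each $c^+$ becomes $c^-$ and vice versa). *)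

theory Defs
  imports Main
begin

text \<open>A red-black graph on species S (type 's) and characters C (type 'c):
  E is the set of (species, character) edges; A is the set of active characters.
  Edges incident to an active character are red, all others are black.\<close>

definition rb_graph :: "'s set \<Rightarrow> 'c set \<Rightarrow> ('s \<times> 'c) set \<Rightarrow> 'c set \<Rightarrow> bool" where
  "rb_graph S C E A \<longleftrightarrow> finite S \<and> finite C \<and> E \<subseteq> S \<times> C \<and> A \<subseteq> C"

definition assoc_matrix :: "('s \<times> 'c) set \<Rightarrow> 'c set \<Rightarrow> 's \<Rightarrow> 'c \<Rightarrow> bool" where
  "assoc_matrix E A s c \<longleftrightarrow> ((s, c) \<in> E \<and> c \<notin> A) \<or> (c \<in> A \<and> (s, c) \<notin> E)"

definition Sc :: "'s set \<Rightarrow> ('s \<times> 'c) set \<Rightarrow> 'c set \<Rightarrow> 'c \<Rightarrow> 's set" where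
  "Sc S E A c = {s \<in> S. assoc_matrix E A s c}"

definition rb_connected :: "'s set \<Rightarrow> 'c set \<Rightarrow> ('s \<times> 'c) set \<Rightarrow> bool" where
  "rb_connected S C E \<longleftrightarrow>
     (let R = {(Inl s, Inr c) | s c. (s, c) \<in> E};
          R' = R \<union> R\<inverse>
      in \<forall>u \<in> Inl ` S \<union> Inr ` C. \<forall>v \<in> Inl ` S \<union> Inr ` C. (u, v) \<in> R'\<^sup>*)"

text \<open>Standing assumptions: no free, null or universal characters, no species
  without characters, no two identical character columns.\<close>
definition standing_assms :: "'s set \<Rightarrow> 'c set \<Rightarrow> ('s \<times> 'c) set \<Rightarrow> 'c set \<Rightarrow> bool" where
  "standing_assms S C E A \<longleftrightarrow>
     \<not> (\<exists>c \<in> A. \<forall>s \<in> S. (s, c) \<in> E) \<and>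
     (\<forall>c \<in> C. \<exists>s. (s, c) \<in> E) \<and>
     \<not> (\<exists>c \<in> C - A. \<forall>s \<in> S. (s, c) \<in> E) \<and>
     (\<forall>s \<in> S. \<exists>c. (s, c) \<in> E) \<and>
     (\<forall>c \<in> C. \<forall>c' \<in> C. (\<forall>s \<in> S. assoc_matrix E A s c = assoc_matrix E A s c') \<longrightarrow> c = c')"

text \<open>A rooted tree on node set N with root r, given by a parent function p
  (the edges are (p x, x) for x \<in> N - {r}), and node states l.
  ancestor p y x: y lies on the path from x to the root (y = x allowed).\<close>
definition ancestor :: "('n \<Rightarrow> 'n) \<Rightarrow> 'n \<Rightarrow> 'n \<Rightarrow> bool" where
  "ancestor p y x \<longleftrightarrow> (\<exists>k. (p ^^ k) x = y)"

definition rooted_tree :: "'n set \<Rightarrow> 'n \<Rightarrow> ('n \<Rightarrow> 'n) \<Rightarrow> bool" where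
  "rooted_tree N r p \<longleftrightarrow> finite N \<and> r \<in> N \<and>
     (\<forall>x \<in> N - {r}. p x \<in> N) \<and> (\<forall>x \<in> N. ancestor p r x)"

text \<open>Edges (identified with their lower endpoint) on which character c changes state.\<close>
definition change_edges :: "'n set \<Rightarrow> 'n \<Rightarrow> ('n \<Rightarrow> 'n) \<Rightarrow> ('n \<Rightarrow> 'c \<Rightarrow> bool) \<Rightarrow> 'c \<Rightarrow> 'n set" where
  "change_edges N r p l c = {x \<in> N - {r}. l (p x) c \<noteq> l x c}"

definition persistent_phylogeny ::
  "'s set \<Rightarrow> 'c set \<Rightarrow> ('s \<times> 'c) set \<Rightarrow> 'c set \<Rightarrow>
   'n set \<Rightarrow> 'n \<Rightarrow> ('n \<Rightarrow> 'n) \<Rightarrow> ('n \<Rightarrow> 'c \<Rightarrow> bool) \<Rightarrow> bool" where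
  "persistent_phylogeny S C E A N r p l \<longleftrightarrow>
     rooted_tree N r p \<and>
     (\<forall>c \<in> C. l r c = (c \<in> A)) \<and>
     (\<forall>c \<in> C. card (change_edges N r p l c) \<le> 2 \<and>
        (card (change_edges N r p l c) = 2 \<longrightarrow>
           (\<exists>x1 x2. change_edges N r p l c = {x1, x2} \<and> x1 \<noteq> x2 \<and> ancestor p x1 x2 \<and>
                    l x1 c \<and> \<not> l x2 c))) \<and>
     (\<forall>s \<in> S. \<exists>x \<in> N. \<forall>c \<in> C. assoc_matrix E A s c = l x c)"

definition reducible :: "'s set \<Rightarrow> 'c set \<Rightarrow> ('s \<times> 'c) set \<Rightarrow> 'c set \<Rightarrow> bool" where
  "reducible S C E A \<longleftrightarrow> rb_graph S C E A \<and> rb_connected S C E \<and>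
     (\<exists>(N :: nat set) r p l. persistent_phylogeny S C E A N r p l)"

definition maximal_char :: "'s set \<Rightarrow> 'c set \<Rightarrow> ('s \<times> 'c) set \<Rightarrow> 'c set \<Rightarrow> 'c \<Rightarrow> bool" where
  "maximal_char S C E A c \<longleftrightarrow> c \<in> C - A \<and>
     \<not> (\<exists>c' \<in> C - A. Sc S E A c \<subset> Sc S E A c')"

definition maximal_reducible :: "'s set \<Rightarrow> 'c set \<Rightarrow> ('s \<times> 'c) set \<Rightarrow> 'c set \<Rightarrow> bool" where
  "maximal_reducible S C E A \<longleftrightarrow> reducible S C E A \<and> A = {} \<and>
     (\<forall>c \<in> C. maximal_char S C E A c)"

text \<open>A line-tree is given by the list of its node states from the root down
  (the i-th node has parent i-1).\<close>
definition line_solves ::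
  "'s set \<Rightarrow> 'c set \<Rightarrow> ('s \<times> 'c) set \<Rightarrow> 'c set \<Rightarrow> ('c \<Rightarrow> bool) list \<Rightarrow> bool" where
  "line_solves S C E A ls \<longleftrightarrow> ls \<noteq> [] \<and>
     persistent_phylogeny S C E A {0..<length ls} 0 (\<lambda>i. i - 1) (\<lambda>i. ls ! i)"

definition is_species_state :: "'s set \<Rightarrow> 'c set \<Rightarrow> ('s \<times> 'c) set \<Rightarrow> 'c set \<Rightarrow> ('c \<Rightarrow> bool) \<Rightarrow> bool" where
  "is_species_state S C E A v \<longleftrightarrow> (\<exists>s \<in> S. \<forall>c \<in> C. assoc_matrix E A s c = v c)"

text \<open>Inversion of a line-tree: the species nodes s_1..s_k (in depth-first order,
  i.e. order along the line, root excluded) are listed in reverse order below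
  the root; each species node keeps its state, hence the edge (s_{i+1}, s_i)
  carries the characters of edge (s_i, s_{i+1}) with opposite signs.  The new
  root carries the root state (the active set), and the edge from the root to
  s_k realises the state of s_k.\<close>
definition invert_line ::
  "'s set \<Rightarrow> 'c set \<Rightarrow> ('s \<times> 'c) set \<Rightarrow> 'c set \<Rightarrow> ('c \<Rightarrow> bool) list \<Rightarrow> ('c \<Rightarrow> bool) list" where
  "invert_line S C E A ls = hd ls # rev (filter (is_species_state S C E A) (tl ls))"

end

theory Submission
  imports Defs "HOL-Library.Sublist"
begin

text \<open>With no active character the root of a line-tree is the all-zero state, so a character
  changing at most twice, gain before loss, reads 0\<dots>0 1\<dots>1 0\<dots>0 down the line.  This
  shape survives passing to a subsequence of the nodes below the root, reversing it and putting
  the zero root back on top.  Inversion does exactly this to the species nodes, so the inverted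
  line is again persistent and still contains every species.\<close>

definition column_changes :: "bool list \<Rightarrow> nat set" where
  "column_changes v = {i. 0 < i \<and> i < length v \<and> v ! (i - 1) \<noteq> v ! i}"

definition persistent_column :: "bool list \<Rightarrow> bool" where
  "persistent_column v \<longleftrightarrow> card (column_changes v) \<le> 2 \<and>
     (card (column_changes v) = 2 \<longrightarrow>
        (\<exists>i j. column_changes v = {i, j} \<and> i < j \<and> v ! i \<and> \<not> v ! j))"

definition single_block :: "bool list \<Rightarrow> bool" where
  "single_block v \<longleftrightarrow> (\<exists>a b c. v = replicate a False @ replicate b True @ replicate c False)"

lemma subseq_replicateE:
  assumes "subseq u (replicate n x)"
  obtains m where "u = replicate m x"
proof
  show "u = replicate (length u) x"
    using assms by (intro replicate_eqI) (auto elim: list_emb_set)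
qed

lemma single_block_subseq:
  assumes "single_block v" "subseq u v"
  shows "single_block u"
proof -
  obtain a b c where v: "v = replicate a False @ replicate b True @ replicate c False"
    using assms(1) unfolding single_block_def by blast
  obtain u1 u23 where u: "u = u1 @ u23" and u1: "subseq u1 (replicate a False)"
    and u23: "subseq u23 (replicate b True @ replicate c False)"
    using assms(2) unfolding v by (rule subseq_appendE)
  obtain u2 u3 where "u23 = u2 @ u3" and u2: "subseq u2 (replicate b True)"
    and u3: "subseq u3 (replicate c False)"
    using u23 by (rule subseq_appendE)
  moreover obtain m1 where "u1 = replicate m1 False" using u1 by (rule subseq_replicateE)
  moreover obtain m2 where "u2 = replicate m2 True" using u2 by (rule subseq_replicateE)
  moreover obtain m3 where "u3 = replicate m3 False" using u3 by (rule subseq_replicateE)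
  ultimately show ?thesis unfolding single_block_def u by blast
qed

lemma single_block_rev: "single_block v \<Longrightarrow> single_block (rev v)"
  unfolding single_block_def by (metis rev_append rev_replicate append.assoc)

lemma single_block_Cons_False: "single_block v \<Longrightarrow> single_block (False # v)"
  unfolding single_block_def by (metis append_Cons replicate_Suc)

lemma nth_single_block:
  "i < a + b + c \<Longrightarrow>
    (replicate a False @ replicate b True @ replicate c False) ! i \<longleftrightarrow> a \<le> i \<and> i < a + b"
  by (auto simp: nth_append)

lemma single_block_of_nth:
  assumes "\<forall>k < length v. v ! k \<longleftrightarrow> a \<le> k \<and> k < b" "a \<le> b"
  shows "single_block v"
proof -
  let ?a = "min a (length v)" and ?b = "min b (length v)"
  have "v = replicate ?a False @ replicate (?b - ?a) True @ replicate (length v - ?b) False"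
    by (rule nth_equalityI) (use assms in \<open>auto simp: nth_append min_def\<close>)
  then show ?thesis unfolding single_block_def by blast
qed

lemma nth_interval_of_single_block_Cons_False:
  assumes "single_block (False # w)"
  shows "\<exists>a b. 0 < a \<and> a < b \<and> (\<forall>k < length (False # w). (False # w) ! k \<longleftrightarrow> a \<le> k \<and> k < b)"
proof -
  obtain a b c where v: "False # w = replicate a False @ replicate b True @ replicate c False"
    using assms unfolding single_block_def by blast
  show ?thesis
  proof (cases "b = 0")
    case True
    then have "True \<notin> set (False # w)"
      unfolding v by simp
    then have "\<forall>k < length (False # w). \<not> (False # w) ! k"
      by (metis (full_types) nth_mem)
    \<comment> \<open>an all-zero column is an empty interval placed beyond the end\<close>
    then show ?thesis
      by (intro exI[of _ "length (False # w)"] exI[of _ "Suc (length (False # w))"]) force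
  next
    case False
    have ones: "\<forall>k < length (False # w). (False # w) ! k \<longleftrightarrow> a \<le> k \<and> k < a + b"
      using nth_single_block[of _ a b c] unfolding v by simp
    then have "0 < a"
      using False ones[rule_format, of 0] by simp
    with False ones show ?thesis
      by (intro exI[of _ a] exI[of _ "a + b"]) simp
  qed
qed

lemma column_changes_interval:
  assumes "\<forall>k < length v. v ! k \<longleftrightarrow> a \<le> k \<and> k < b" "0 < a" "a < b"
  shows "column_changes v = {a, b} \<inter> {..<length v}"
proof (rule set_eqI)
  fix i
  have "i \<in> column_changes v \<longleftrightarrow>
      0 < i \<and> i < length v \<and> (a \<le> i - 1 \<and> i - 1 < b) \<noteq> (a \<le> i \<and> i < b)"
    using assms(1) unfolding column_changes_def by auto
  also have "\<dots> \<longleftrightarrow> i \<in> {a, b} \<inter> {..<length v}"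
    using assms(2,3) by (cases i) auto
  finally show "i \<in> column_changes v \<longleftrightarrow> i \<in> {a, b} \<inter> {..<length v}" .
qed

lemma nth_interval_of_column_changes:
  assumes "\<not> v ! 0" "0 < a" "a < b" "column_changes v = {a, b} \<inter> {..<length v}"
  shows "\<forall>k < length v. v ! k \<longleftrightarrow> a \<le> k \<and> k < b"
proof (intro allI impI)
  fix k assume "k < length v"
  then show "v ! k \<longleftrightarrow> a \<le> k \<and> k < b"
  proof (induction k)
    case 0
    then show ?case using assms(1,2) by simp
  next
    case (Suc k)
    have "v ! Suc k \<noteq> v ! k \<longleftrightarrow> Suc k \<in> column_changes v"
      using Suc.prems unfolding column_changes_def by auto
    also have "\<dots> \<longleftrightarrow> Suc k = a \<or> Suc k = b"
      using Suc.prems unfolding assms(4) by auto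
    also have "\<dots> \<longleftrightarrow> (a \<le> Suc k \<and> Suc k < b) \<noteq> (a \<le> k \<and> k < b)"
      using assms(3) by auto
    finally have "v ! Suc k \<noteq> v ! k \<longleftrightarrow> (a \<le> Suc k \<and> Suc k < b) \<noteq> (a \<le> k \<and> k < b)" .
    moreover have "v ! k \<longleftrightarrow> a \<le> k \<and> k < b"
      using Suc.IH Suc.prems by simp
    ultimately show ?case by argo
  qed
qed

lemma persistent_column_interval:
  assumes "\<forall>k < length v. v ! k \<longleftrightarrow> a \<le> k \<and> k < b" "0 < a" "a < b"
  shows "persistent_column v"
proof -
  have changes: "column_changes v = {a, b} \<inter> {..<length v}"
    using assms by (rule column_changes_interval)
  have "card (column_changes v) \<le> card {a, b}"
    unfolding changes by (rule card_mono) auto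
  also have "\<dots> = 2"
    using assms(3) by simp
  finally have "card (column_changes v) \<le> 2" .
  moreover have "\<exists>i j. column_changes v = {i, j} \<and> i < j \<and> v ! i \<and> \<not> v ! j"
    if two: "card (column_changes v) = 2"
  proof -
    have "b < length v"
    proof (rule ccontr)
      assume "\<not> b < length v"
      then have "column_changes v \<subseteq> {a}"
        unfolding changes by auto
      then have "card (column_changes v) \<le> 1"
        using card_mono[of "{a}"] by simp
      with two show False by simp
    qed
    with assms show ?thesis
      by (intro exI[of _ a] exI[of _ b]) (auto simp: changes)
  qed
  ultimately show ?thesis
    unfolding persistent_column_def by blast
qed

lemma interval_of_persistent_column:
  assumes "persistent_column v"
  shows "\<exists>a b. 0 < a \<and> a < b \<and> column_changes v = {a, b} \<inter> {..<length v}"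
proof -
  have changes_in: "column_changes v \<subseteq> {0<..<length v}"
    unfolding column_changes_def by auto
  then have "finite (column_changes v)"
    by (rule finite_subset) simp
  consider "card (column_changes v) = 0" | "card (column_changes v) = 1"
    | "card (column_changes v) = 2"
    using assms unfolding persistent_column_def by linarith
  then show ?thesis
  proof cases
    case 1
    then have "column_changes v = {}"
      using \<open>finite (column_changes v)\<close> by simp
    then show ?thesis
      by (intro exI[of _ "Suc (length v)"] exI[of _ "Suc (Suc (length v))"]) auto
  next
    case 2
    then obtain i where i: "column_changes v = {i}"
      by (rule card_1_singletonE)
    with changes_in show ?thesis
      by (intro exI[of _ i] exI[of _ "length v"]) auto
  next
    case 3
    then obtain i j where ij: "column_changes v = {i, j}" "i < j"
      using assms unfolding persistent_column_def by auto
    with changes_in show ?thesis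
      by (intro exI[of _ i] exI[of _ j]) auto
  qed
qed

lemma persistent_column_Cons_False_iff:
  "persistent_column (False # w) \<longleftrightarrow> single_block (False # w)"
proof
  assume "persistent_column (False # w)"
  then obtain a b where ab: "0 < a" "a < b"
    and "column_changes (False # w) = {a, b} \<inter> {..<length (False # w)}"
    using interval_of_persistent_column by blast
  then have "\<forall>k < length (False # w). (False # w) ! k \<longleftrightarrow> a \<le> k \<and> k < b"
    by (intro nth_interval_of_column_changes) simp_all
  then show "single_block (False # w)"
    using less_imp_le[OF ab(2)] by (rule single_block_of_nth)
next
  assume "single_block (False # w)"
  then show "persistent_column (False # w)"
    using nth_interval_of_single_block_Cons_False persistent_column_interval by blast
qed

lemma persistent_column_Cons_False_rev_subseq:
  assumes "persistent_column (False # w)" "subseq u w"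
  shows "persistent_column (False # rev u)"
proof -
  have "single_block (False # w)"
    using assms(1) by (simp add: persistent_column_Cons_False_iff)
  moreover have "subseq u (False # w)"
    using assms(2) by blast
  ultimately have "single_block u"
    by (rule single_block_subseq)
  then have "single_block (False # rev u)"
    by (intro single_block_Cons_False single_block_rev)
  then show ?thesis
    by (simp add: persistent_column_Cons_False_iff)
qed

lemma funpow_pred_nat: "((\<lambda>i::nat. i - 1) ^^ k) i = i - k"
  by (induction k) auto

lemma ancestor_pred_iff: "ancestor (\<lambda>i::nat. i - 1) j i \<longleftrightarrow> j \<le> i"
  unfolding ancestor_def funpow_pred_nat by (metis diff_diff_cancel diff_le_self)

lemma rooted_tree_line: "0 < n \<Longrightarrow> rooted_tree {0..<n} 0 (\<lambda>i::nat. i - 1)"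
  unfolding rooted_tree_def ancestor_pred_iff by auto

lemma change_edges_line:
  "change_edges {0..<length ls} 0 (\<lambda>i. i - 1) (\<lambda>i. ls ! i) c = column_changes (map (\<lambda>l. l c) ls)"
  unfolding change_edges_def column_changes_def by auto

lemma persistent_column_line:
  "(card (change_edges {0..<length ls} 0 (\<lambda>i. i - 1) (\<lambda>i. ls ! i) c) \<le> 2 \<and>
     (card (change_edges {0..<length ls} 0 (\<lambda>i. i - 1) (\<lambda>i. ls ! i) c) = 2 \<longrightarrow>
       (\<exists>i j. change_edges {0..<length ls} 0 (\<lambda>i. i - 1) (\<lambda>i. ls ! i) c = {i, j} \<and>
          i \<noteq> j \<and> ancestor (\<lambda>i. i - 1) i j \<and> (ls ! i) c \<and> \<not> (ls ! j) c)))
   \<longleftrightarrow> persistent_column (map (\<lambda>l. l c) ls)"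
proof -
  let ?v = "map (\<lambda>l. l c) ls"
  have "(i \<noteq> j \<and> i \<le> j \<and> (ls ! i) c \<and> \<not> (ls ! j) c) \<longleftrightarrow> (i < j \<and> ?v ! i \<and> \<not> ?v ! j)"
    if "column_changes ?v = {i, j}" for i j
  proof -
    have "i < length ls" "j < length ls"
      using that unfolding column_changes_def by (auto simp: set_eq_iff)
    then show ?thesis by auto
  qed
  then show ?thesis
    unfolding persistent_column_def change_edges_line ancestor_pred_iff by blast
qed

lemma bex_set_conv_nth: "(\<exists>l \<in> set ls. P l) \<longleftrightarrow> (\<exists>i \<in> {0..<length ls}. P (ls ! i))"
  by (metis atLeastLessThan_iff in_set_conv_nth zero_le)

lemma line_solves_iff:
  "line_solves S C E A ls \<longleftrightarrow> ls \<noteq> [] \<and>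
     (\<forall>c \<in> C. hd ls c = (c \<in> A) \<and> persistent_column (map (\<lambda>l. l c) ls)) \<and>
     (\<forall>s \<in> S. \<exists>l \<in> set ls. \<forall>c \<in> C. assoc_matrix E A s c = l c)"
proof (cases "ls = []")
  case False
  then have "rooted_tree {0..<length ls} 0 (\<lambda>i. i - 1)"
    by (intro rooted_tree_line) simp
  with False have "line_solves S C E A ls \<longleftrightarrow>
      (\<forall>c \<in> C. hd ls c = (c \<in> A)) \<and> (\<forall>c \<in> C. persistent_column (map (\<lambda>l. l c) ls)) \<and>
      (\<forall>s \<in> S. \<exists>l \<in> set ls. \<forall>c \<in> C. assoc_matrix E A s c = l c)"
    unfolding line_solves_def persistent_phylogeny_def persistent_column_line
    by (simp add: hd_conv_nth bex_set_conv_nth)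
  with False show ?thesis
    by blast
qed (simp add: line_solves_def)

lemma line_solves_Cons_rev_subseq:
  assumes solves: "line_solves S C E {} (root # below)" and "subseq kept below"
    and keeps_species: "\<And>s l. s \<in> S \<Longrightarrow> l \<in> set below \<Longrightarrow>
      \<forall>c \<in> C. assoc_matrix E {} s c = l c \<Longrightarrow> l \<in> set kept"
  shows "line_solves S C E {} (root # rev kept)"
proof -
  have root: "\<forall>c \<in> C. \<not> root c"
    using solves unfolding line_solves_iff by simp
  have columns: "\<forall>c \<in> C. persistent_column (False # map (\<lambda>l. l c) below)"
    using root solves unfolding line_solves_iff by simp
  have species: "\<forall>s \<in> S. \<exists>l \<in> set (root # below). \<forall>c \<in> C. assoc_matrix E {} s c = l c"
    using solves unfolding line_solves_iff by (elim conjE)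
  have "persistent_column (False # rev (map (\<lambda>l. l c) kept))" if c: "c \<in> C" for c
  proof (rule persistent_column_Cons_False_rev_subseq)
    show "persistent_column (False # map (\<lambda>l. l c) below)"
      using columns c ..
    show "subseq (map (\<lambda>l. l c) kept) (map (\<lambda>l. l c) below)"
      using \<open>subseq kept below\<close> by (rule subseq_map)
  qed
  moreover have "\<exists>l \<in> set (root # rev kept). \<forall>c \<in> C. assoc_matrix E {} s c = l c"
    if s: "s \<in> S" for s
  proof -
    obtain l where "l \<in> set (root # below)" and l: "\<forall>c \<in> C. assoc_matrix E {} s c = l c"
      using bspec[OF species s] by (rule bexE)
    then have "l \<in> set (root # rev kept)"
      using keeps_species[OF s] by auto
    with l show ?thesis by (rule bexI)
  qed
  ultimately show ?thesis
    unfolding line_solves_iff using root by (simp add: rev_map)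
qed

theorem lemma3:
  fixes S :: "'s set" and C :: "'c set" and E :: "('s \<times> 'c) set" and A :: "'c set"
    and TM :: "('c \<Rightarrow> bool) list"
  assumes "rb_graph S C E A"
    and "standing_assms S C E A"
    and "maximal_reducible S C E A"
    and "line_solves S C E A TM"
  shows "line_solves S C E A (invert_line S C E A TM)"
proof -
  have A: "A = {}"
    using assms(3) unfolding maximal_reducible_def by simp
  obtain root below where TM: "TM = root # below"
    using assms(4) unfolding line_solves_def by (meson neq_Nil_conv)
  have "line_solves S C E {} (root # rev (filter (is_species_state S C E {}) below))"
  proof (rule line_solves_Cons_rev_subseq)
    show "line_solves S C E {} (root # below)"
      using assms(4) unfolding A TM .
    fix s l
    assume "s \<in> S" "l \<in> set below" "\<forall>c \<in> C. assoc_matrix E {} s c = l c"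
    then show "l \<in> set (filter (is_species_state S C E {}) below)"
      unfolding is_species_state_def by auto
  qed simp
  then show ?thesis
    unfolding invert_line_def A TM by simp
qed

end
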